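(* Let $G$ be a graph. Then \[\chi(G) \leq \frac{1}{2} \left(\omega(G) + \Delta(G) + 1 \right) + \frac{5\kappa(\overline{G}) - \eta(G)}{4}.\]
   Context: All graphs are finite and simple with non-empty vertex set. $\chi$ is the chromatic number, $\omega$ the clique number, $\Delta$ the maximum degree. $\overline{G}$ is the complement of $G$, and $\kappa(\overline{G})$ is its vertex connectivity: the minimum size of a set $K$ of vertices with $\overline{G}-K$ disconnected, or $|G|-1$ if $\overline{G}$ is complete. The chromatic excess of $G$ is $\eta(G) = \max_{H} \left(|H| - 3\chi(H)\right)$, where the maximum ranges over all induced subgraphs $H$ of $G$ with non-empty vertex set and $|H|$ is the number of vertices of $H$. *)

theory Defs
  imports Complex_Main
begin

text \<open>A finite simple graph: non-empty finite vertex set V, and a symmetric,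
irreflexive adjacency relation E (only its restriction to V matters).\<close>
definition simple_graph :: "'a set \<Rightarrow> ('a \<Rightarrow> 'a \<Rightarrow> bool) \<Rightarrow> bool" where
  "simple_graph V E \<longleftrightarrow> finite V \<and> V \<noteq> {} \<and>
     (\<forall>x\<in>V. \<forall>y\<in>V. E x y \<longrightarrow> E y x) \<and> (\<forall>x\<in>V. \<not> E x x)"

definition proper_colouring :: "'a set \<Rightarrow> ('a \<Rightarrow> 'a \<Rightarrow> bool) \<Rightarrow> nat \<Rightarrow> ('a \<Rightarrow> nat) \<Rightarrow> bool" where
  "proper_colouring S E k f \<longleftrightarrow>
     (\<forall>x\<in>S. f x < k) \<and> (\<forall>x\<in>S. \<forall>y\<in>S. E x y \<longrightarrow> f x \<noteq> f y)"

definition chromatic_number :: "'a set \<Rightarrow> ('a \<Rightarrow> 'a \<Rightarrow> bool) \<Rightarrow> nat" where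
  "chromatic_number S E = (LEAST k. \<exists>f. proper_colouring S E k f)"

definition is_clique :: "'a set \<Rightarrow> ('a \<Rightarrow> 'a \<Rightarrow> bool) \<Rightarrow> 'a set \<Rightarrow> bool" where
  "is_clique V E C \<longleftrightarrow> C \<subseteq> V \<and> (\<forall>x\<in>C. \<forall>y\<in>C. x \<noteq> y \<longrightarrow> E x y)"

definition clique_number :: "'a set \<Rightarrow> ('a \<Rightarrow> 'a \<Rightarrow> bool) \<Rightarrow> nat" where
  "clique_number V E = Max {card C | C. is_clique V E C}"

definition degree :: "'a set \<Rightarrow> ('a \<Rightarrow> 'a \<Rightarrow> bool) \<Rightarrow> 'a \<Rightarrow> nat" where
  "degree V E v = card {u\<in>V. E v u}"

definition max_degree :: "'a set \<Rightarrow> ('a \<Rightarrow> 'a \<Rightarrow> bool) \<Rightarrow> nat" where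
  "max_degree V E = Max (degree V E ` V)"

definition compl_adj :: "('a \<Rightarrow> 'a \<Rightarrow> bool) \<Rightarrow> 'a \<Rightarrow> 'a \<Rightarrow> bool" where
  "compl_adj E x y \<longleftrightarrow> x \<noteq> y \<and> \<not> E x y"

definition is_complete :: "'a set \<Rightarrow> ('a \<Rightarrow> 'a \<Rightarrow> bool) \<Rightarrow> bool" where
  "is_complete V E \<longleftrightarrow> (\<forall>x\<in>V. \<forall>y\<in>V. x \<noteq> y \<longrightarrow> E x y)"

definition connected_in :: "'a set \<Rightarrow> ('a \<Rightarrow> 'a \<Rightarrow> bool) \<Rightarrow> bool" where
  "connected_in S E \<longleftrightarrow>
     (\<forall>x\<in>S. \<forall>y\<in>S. (\<lambda>u v. u \<in> S \<and> v \<in> S \<and> E u v)\<^sup>*\<^sup>* x y)"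

definition vertex_connectivity :: "'a set \<Rightarrow> ('a \<Rightarrow> 'a \<Rightarrow> bool) \<Rightarrow> nat" where
  "vertex_connectivity V E =
     (if is_complete V E then card V - 1
      else Min {card K | K. K \<subseteq> V \<and> \<not> connected_in (V - K) E})"

definition chromatic_excess :: "'a set \<Rightarrow> ('a \<Rightarrow> 'a \<Rightarrow> bool) \<Rightarrow> int" where
  "chromatic_excess V E =
     Max {int (card S) - 3 * int (chromatic_number S E) | S. S \<subseteq> V \<and> S \<noteq> {}}"

end

(*
  If G has no three pairwise non-adjacent vertices, every colour class of an
  optimal colouring has one or two vertices, so 2 chi = n + s where s counts the singleton
  classes. The singletons form a clique, and recolouring arguments show that this clique
  can be enlarged by min s (n - 1 - Delta) further vertices; together with the clique formed
  by the non-neighbours of any vertex this gives 4 chi <= n + 2 omega + Delta + 1.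

  For an arbitrary G, let H attain the chromatic excess. Every vertex outside H has at least
  chi(H) neighbours in H, since otherwise adding it to H would increase |H| - 3 chi(H); so
  induction on G - H yields 4 chi + max 0 eta <= n + 2 omega + Delta + 1.

  Finally, removing a minimum vertex cut K of the complement leaves a join of two non-empty
  graphs A and B. In a join the clique numbers add up, the excess is subadditive and a vertex
  of A sees all of B, so the bounds for A and B give 4 chi + eta <= 2 omega + 2 Delta + 2 for
  the join. Putting K back costs at most |K| in chi and in eta.
*)

theory Submission
  imports Defs
begin

section \<open>Colourings\<close>

lemma simple_graph_subset:
  assumes "simple_graph V E" "S \<subseteq> V" "S \<noteq> {}"
  shows "simple_graph S E"
  using assms unfolding simple_graph_def by (meson finite_subset subsetD)

lemma
  assumes "simple_graph V E"
  shows simple_graph_finite: "finite V"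
    and simple_graph_nonempty: "V \<noteq> {}"
    and simple_graph_sym: "\<lbrakk>x \<in> V; y \<in> V; E x y\<rbrakk> \<Longrightarrow> E y x"
    and simple_graph_irrefl: "x \<in> V \<Longrightarrow> \<not> E x x"
  using assms unfolding simple_graph_def by blast+

lemma simple_graph_finite_subset: "simple_graph V E \<Longrightarrow> S \<subseteq> V \<Longrightarrow> finite S"
  using simple_graph_finite finite_subset by blast

lemma chromatic_number_le: "proper_colouring S E k f \<Longrightarrow> chromatic_number S E \<le> k"
  unfolding chromatic_number_def by (rule Least_le) blast

lemma proper_colouring_subset:
  "proper_colouring S E k f \<Longrightarrow> T \<subseteq> S \<Longrightarrow> proper_colouring T E k f"
  unfolding proper_colouring_def by blast

lemma proper_colouring_fun_upd:
  assumes "proper_colouring S E k f" "c < k" "\<not> E x x"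
    and "\<And>y. \<lbrakk>y \<in> S; y \<noteq> x; f y = c\<rbrakk> \<Longrightarrow> \<not> E x y \<and> \<not> E y x"
  shows "proper_colouring (insert x S) E k (f(x := c))"
  using assms unfolding proper_colouring_def by auto

lemma proper_colouring_compress:
  assumes "finite S" and "\<And>x y. \<lbrakk>x \<in> S; y \<in> S; E x y\<rbrakk> \<Longrightarrow> g x \<noteq> g y"
  obtains f where "proper_colouring S E (card (g ` S)) f"
proof -
  obtain h where h: "bij_betw h (g ` S) {0..<card (g ` S)}"
    using ex_bij_betw_finite_nat assms(1) by blast
  have "proper_colouring S E (card (g ` S)) (h \<circ> g)"
    unfolding proper_colouring_def
  proof (intro conjI ballI impI)
    fix x assume "x \<in> S"
    then show "(h \<circ> g) x < card (g ` S)" using bij_betwE[OF h] by auto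
  next
    fix x y assume "x \<in> S" "y \<in> S" "E x y"
    then show "(h \<circ> g) x \<noteq> (h \<circ> g) y"
      using assms(2) bij_betw_imp_inj_on[OF h] by (auto dest: inj_onD)
  qed
  then show thesis by (rule that)
qed

lemma chromatic_number_le_card_image:
  assumes "finite S" and "\<And>x y. \<lbrakk>x \<in> S; y \<in> S; E x y\<rbrakk> \<Longrightarrow> g x \<noteq> g y"
  shows "chromatic_number S E \<le> card (g ` S)"
proof -
  obtain f where "proper_colouring S E (card (g ` S)) f"
    using assms by (rule proper_colouring_compress)
  then show ?thesis by (rule chromatic_number_le)
qed

lemma chromatic_number_colouring:
  assumes "simple_graph V E" "S \<subseteq> V"
  obtains f where "proper_colouring S E (chromatic_number S E) f"
proof -
  have "finite S" using assms by (rule simple_graph_finite_subset)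
  moreover have "\<And>x y. \<lbrakk>x \<in> S; y \<in> S; E x y\<rbrakk> \<Longrightarrow> id x \<noteq> id y"
    using simple_graph_irrefl[OF assms(1)] assms(2) by auto
  ultimately obtain f where "proper_colouring S E (card (id ` S)) f"
    by (rule proper_colouring_compress)
  then have "\<exists>k f. proper_colouring S E k f" by blast
  then have "\<exists>f. proper_colouring S E (chromatic_number S E) f"
    unfolding chromatic_number_def by (rule LeastI_ex)
  then show thesis using that by blast
qed

lemma chromatic_number_le_card:
  assumes "simple_graph V E" "S \<subseteq> V"
  shows "chromatic_number S E \<le> card S"
  using chromatic_number_le_card_image[of S E id] assms
    simple_graph_finite_subset simple_graph_irrefl by fastforce

lemma chromatic_number_pos:
  assumes "simple_graph V E" "S \<subseteq> V" "S \<noteq> {}"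
  shows "1 \<le> chromatic_number S E"
proof (rule ccontr)
  assume "\<not> 1 \<le> chromatic_number S E"
  moreover obtain f where "proper_colouring S E (chromatic_number S E) f"
    using assms(1,2) by (rule chromatic_number_colouring)
  ultimately show False using assms(3) unfolding proper_colouring_def by auto
qed

lemma chromatic_number_mono:
  assumes "simple_graph V E" "S \<subseteq> V" "T \<subseteq> S"
  shows "chromatic_number T E \<le> chromatic_number S E"
proof -
  obtain f where "proper_colouring S E (chromatic_number S E) f"
    using assms(1,2) by (rule chromatic_number_colouring)
  then show ?thesis using assms(3) by (meson proper_colouring_subset chromatic_number_le)
qed

lemma chromatic_number_Un_le:
  assumes "simple_graph V E" "A \<subseteq> V" "B \<subseteq> V"
  shows "chromatic_number (A \<union> B) E \<le> chromatic_number A E + chromatic_number B E"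
proof -
  obtain fA where fA: "proper_colouring A E (chromatic_number A E) fA"
    using assms(1,2) by (rule chromatic_number_colouring)
  obtain fB where fB: "proper_colouring B E (chromatic_number B E) fB"
    using assms(1,3) by (rule chromatic_number_colouring)
  define h where "h x = (if x \<in> A then fA x else chromatic_number A E + fB x)" for x
  have "proper_colouring (A \<union> B) E (chromatic_number A E + chromatic_number B E) h"
    unfolding proper_colouring_def
  proof (intro conjI ballI impI)
    fix x assume "x \<in> A \<union> B"
    then show "h x < chromatic_number A E + chromatic_number B E"
      using fA fB unfolding proper_colouring_def h_def by (cases "x \<in> A") auto
  next
    fix x y assume "x \<in> A \<union> B" "y \<in> A \<union> B" "E x y"
    then show "h x \<noteq> h y"
      using fA fB unfolding proper_colouring_def h_def by (cases "x \<in> A"; cases "y \<in> A") force+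
  qed
  then show ?thesis by (rule chromatic_number_le)
qed

lemma chromatic_number_join_ge:
  assumes "simple_graph V E" "A \<union> B \<subseteq> V" "A \<inter> B = {}"
    and "\<And>a b. \<lbrakk>a \<in> A; b \<in> B\<rbrakk> \<Longrightarrow> E a b"
  shows "chromatic_number A E + chromatic_number B E \<le> chromatic_number (A \<union> B) E"
proof -
  obtain f where f: "proper_colouring (A \<union> B) E (chromatic_number (A \<union> B) E) f"
    using assms(1,2) by (rule chromatic_number_colouring)
  have fin: "finite A" "finite B"
    using assms(1,2) simple_graph_finite_subset by auto
  have "chromatic_number A E \<le> card (f ` A)" "chromatic_number B E \<le> card (f ` B)"
    using f fin by (auto intro!: chromatic_number_le_card_image simp: proper_colouring_def)
  moreover have "f ` A \<inter> f ` B = {}"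
    using f assms(4) unfolding proper_colouring_def by fastforce
  then have "card (f ` A) + card (f ` B) = card (f ` (A \<union> B))"
    using fin by (simp add: card_Un_disjoint image_Un)
  moreover have "f ` (A \<union> B) \<subseteq> {..<chromatic_number (A \<union> B) E}"
    using f unfolding proper_colouring_def by auto
  then have "card (f ` (A \<union> B)) \<le> chromatic_number (A \<union> B) E"
    using card_mono[of "{..<chromatic_number (A \<union> B) E}"] by fastforce
  ultimately show ?thesis by linarith
qed

section \<open>Degrees, cliques and the chromatic excess\<close>

lemma degree_mono: "finite S \<Longrightarrow> T \<subseteq> S \<Longrightarrow> degree T E v \<le> degree S E v"
  unfolding degree_def by (rule card_mono) auto

lemma degree_Un_disjoint:
  "finite A \<Longrightarrow> finite B \<Longrightarrow> A \<inter> B = {} \<Longrightarrow>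
     degree (A \<union> B) E v = degree A E v + degree B E v"
  unfolding degree_def by (subst card_Un_disjoint[symmetric]) (auto intro: arg_cong[where f = card])

lemma degree_le_max_degree: "finite S \<Longrightarrow> v \<in> S \<Longrightarrow> degree S E v \<le> max_degree S E"
  unfolding max_degree_def by simp

lemma max_degree_obtain:
  assumes "finite S" "S \<noteq> {}"
  obtains v where "v \<in> S" "degree S E v = max_degree S E"
  using Max_in[of "degree S E ` S"] assms unfolding max_degree_def by fastforce

lemma max_degree_mono:
  assumes "finite S" "T \<subseteq> S" "T \<noteq> {}"
  shows "max_degree T E \<le> max_degree S E"
proof -
  obtain v where "v \<in> T" "degree T E v = max_degree T E"
    using assms finite_subset max_degree_obtain by metis
  then show ?thesis
    using assms degree_mono[OF assms(1,2)] degree_le_max_degree by (metis le_trans subsetD)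
qed

lemma card_non_neighbours:
  assumes "simple_graph S E" "v \<in> S"
  shows "card {u \<in> S. u \<noteq> v \<and> \<not> E v u} + degree S E v + 1 = card S"
proof -
  define N where "N = {u \<in> S. E v u}"
  define M where "M = {u \<in> S. u \<noteq> v \<and> \<not> E v u}"
  have fin: "finite N" "finite M"
    using simple_graph_finite[OF assms(1)] unfolding N_def M_def by auto
  have "S = insert v (N \<union> M)" "v \<notin> N \<union> M"
    using assms(2) simple_graph_irrefl[OF assms] unfolding N_def M_def by auto
  then have "card S = Suc (card (N \<union> M))"
    using fin by (metis card_insert_disjoint finite_Un)
  also have "card (N \<union> M) = card N + card M"
    using fin by (rule card_Un_disjoint) (auto simp: N_def M_def)
  finally show ?thesis unfolding degree_def N_def M_def by simp
qed

lemma max_degree_less_card: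
  assumes "simple_graph S E"
  shows "max_degree S E < card S"
proof -
  obtain v where "v \<in> S" "degree S E v = max_degree S E"
    using assms simple_graph_finite simple_graph_nonempty max_degree_obtain by metis
  then show ?thesis using card_non_neighbours[OF assms] by fastforce
qed

lemma greedy_colouring:
  assumes "finite S"
    and "\<And>x y. \<lbrakk>x \<in> S; y \<in> S; E x y\<rbrakk> \<Longrightarrow> E y x" "\<And>x. x \<in> S \<Longrightarrow> \<not> E x x"
    and "\<And>v. v \<in> S \<Longrightarrow> degree S E v \<le> d"
  shows "\<exists>f. proper_colouring S E (Suc d) f"
  using assms
proof (induction S rule: finite_induct)
  case empty
  then show ?case by (simp add: proper_colouring_def)
next
  case (insert x S)
  have "degree S E v \<le> d" if "v \<in> S" for v
    using degree_mono[of "insert x S" S E v] insert.hyps(1) insert.prems(3) that by fastforce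
  then obtain f where f: "proper_colouring S E (Suc d) f"
    using insert by blast
  define N where "N = {y \<in> S. E x y}"
  have "card (f ` N) \<le> d"
    using card_image_le[of N f] degree_mono[of "insert x S" N E x] insert.hyps(1)
      insert.prems(3)[of x] unfolding N_def degree_def by fastforce
  then have "\<not> {..<Suc d} \<subseteq> f ` N"
    using card_mono[of "f ` N" "{..<Suc d}"] insert.hyps(1) N_def by fastforce
  then obtain c where "c < Suc d" "c \<notin> f ` N" by auto
  then have "proper_colouring (insert x S) E (Suc d) (f(x := c))"
    using insert.prems(1,2) unfolding N_def
    by (intro proper_colouring_fun_upd[OF f]) blast+
  then show ?case by blast
qed

lemma chromatic_number_le_max_degree:
  assumes "simple_graph S E"
  shows "chromatic_number S E \<le> Suc (max_degree S E)"
  using greedy_colouring[of S E "max_degree S E"] assms chromatic_number_le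
    simple_graph_finite simple_graph_sym simple_graph_irrefl degree_le_max_degree by metis

lemma clique_sizes_finite: "finite V \<Longrightarrow> finite {card C | C. is_clique V E C}"
  by (rule finite_subset[of _ "card ` Pow V"]) (auto simp: is_clique_def)

lemma card_le_clique_number: "finite V \<Longrightarrow> is_clique V E C \<Longrightarrow> card C \<le> clique_number V E"
  unfolding clique_number_def using clique_sizes_finite by (intro Max_ge) blast+

lemma clique_number_obtain:
  assumes "finite V"
  obtains C where "is_clique V E C" "card C = clique_number V E"
proof -
  have "is_clique V E {}" unfolding is_clique_def by simp
  then have "clique_number V E \<in> {card C | C. is_clique V E C}"
    unfolding clique_number_def using clique_sizes_finite[OF assms] by (intro Max_in) blast+
  then show thesis using that by auto
qed

lemma clique_number_mono:
  assumes "finite V" "S \<subseteq> V"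
  shows "clique_number S E \<le> clique_number V E"
proof -
  obtain C where "is_clique S E C" "card C = clique_number S E"
    using assms finite_subset clique_number_obtain by metis
  then show ?thesis
    using assms card_le_clique_number unfolding is_clique_def by (metis order_trans)
qed

lemma is_clique_insert:
  assumes "is_clique V E C" "z \<in> V" "\<And>a. \<lbrakk>a \<in> C; a \<noteq> z\<rbrakk> \<Longrightarrow> E z a \<and> E a z"
  shows "is_clique V E (insert z C)"
  using assms unfolding is_clique_def by blast

lemma excess_values_finite:
  "finite V \<Longrightarrow> finite {int (card H) - 3 * int (chromatic_number H E) | H. H \<subseteq> V \<and> H \<noteq> {}}"
  by (rule finite_subset[of _ "(\<lambda>H. int (card H) - 3 * int (chromatic_number H E)) ` Pow V"]) auto

lemma chromatic_excess_ge:
  "finite V \<Longrightarrow> H \<subseteq> V \<Longrightarrow> H \<noteq> {} \<Longrightarrow>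
     int (card H) - 3 * int (chromatic_number H E) \<le> chromatic_excess V E"
  unfolding chromatic_excess_def using excess_values_finite by (intro Max_ge) blast+

lemma chromatic_excess_obtain:
  assumes "finite V" "V \<noteq> {}"
  obtains H where "H \<subseteq> V" "H \<noteq> {}"
    "chromatic_excess V E = int (card H) - 3 * int (chromatic_number H E)"
proof -
  have "chromatic_excess V E \<in> {int (card H) - 3 * int (chromatic_number H E) | H. H \<subseteq> V \<and> H \<noteq> {}}"
    unfolding chromatic_excess_def using excess_values_finite[OF assms(1)] assms(2)
    by (intro Max_in) blast+
  then show thesis using that by blast
qed

lemma chromatic_excess_le_card:
  assumes "simple_graph V E"
  shows "chromatic_excess V E \<le> int (card V) - 3"
proof -
  obtain H where "H \<subseteq> V" "H \<noteq> {}"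
    "chromatic_excess V E = int (card H) - 3 * int (chromatic_number H E)"
    using assms simple_graph_finite simple_graph_nonempty chromatic_excess_obtain by metis
  moreover have "card H \<le> card V"
    using calculation(1) simple_graph_finite[OF assms] by (rule card_mono[rotated])
  moreover have "1 \<le> chromatic_number H E"
    using assms calculation(1,2) by (rule chromatic_number_pos)
  ultimately show ?thesis by linarith
qed

lemma excess_of_subset_le:
  assumes "finite V" "T \<subseteq> V"
  shows "int (card T) - 3 * int (chromatic_number T E) \<le> max 0 (chromatic_excess V E)"
  using chromatic_excess_ge[OF assms, of E] by (cases "T = {}") auto

lemma chromatic_excess_Un_le:
  assumes "simple_graph V E" "S \<subseteq> V" "S \<noteq> {}" "K \<subseteq> V"
  shows "chromatic_excess (S \<union> K) E \<le> chromatic_excess S E + int (card K)"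
proof -
  have fin: "finite S" "finite K"
    using simple_graph_finite_subset[OF assms(1)] assms(2,4) by auto
  obtain H where H: "H \<subseteq> S \<union> K" "H \<noteq> {}"
    "chromatic_excess (S \<union> K) E = int (card H) - 3 * int (chromatic_number H E)"
    using fin assms(3) chromatic_excess_obtain[of "S \<union> K" E] by auto
  show ?thesis
  proof (cases "H \<inter> S = {}")
    case True
    then have "card H \<le> card K"
      using H(1) fin by (intro card_mono) auto
    moreover have "1 \<le> chromatic_number H E"
      using assms H by (intro chromatic_number_pos[of V]) auto
    moreover have "-2 \<le> chromatic_excess S E"
    proof -
      obtain a where "a \<in> S" using assms(3) by blast
      then have "int (card {a}) - 3 * int (chromatic_number {a} E) \<le> chromatic_excess S E"
        using fin by (intro chromatic_excess_ge) auto
      moreover have "chromatic_number {a} E \<le> 1"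
        using \<open>a \<in> S\<close> assms chromatic_number_le_card[of V E "{a}"] by auto
      ultimately show ?thesis by simp
    qed
    ultimately show ?thesis using H(3) by linarith
  next
    case False
    have "card H \<le> card (H \<inter> S) + card K"
      using H(1) fin card_Un_le[of "H \<inter> S" K] card_mono[of "(H \<inter> S) \<union> K" H] by fastforce
    moreover have "chromatic_number (H \<inter> S) E \<le> chromatic_number H E"
      using assms H(1) by (intro chromatic_number_mono[of V]) auto
    moreover have "int (card (H \<inter> S)) - 3 * int (chromatic_number (H \<inter> S) E) \<le> chromatic_excess S E"
      using fin False by (intro chromatic_excess_ge) auto
    ultimately show ?thesis using H(3) by linarith
  qed
qed

section \<open>Graphs without three pairwise non-adjacent vertices\<close>

locale optimal_colouring =
  fixes S :: "'a set" and E :: "'a \<Rightarrow> 'a \<Rightarrow> bool" and f :: "'a \<Rightarrow> nat"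
  assumes simple: "simple_graph S E"
    and optimal: "proper_colouring S E (chromatic_number S E) f"
begin

abbreviation k :: nat where "k \<equiv> chromatic_number S E"

lemma colour_less: "x \<in> S \<Longrightarrow> f x < k"
  using optimal unfolding proper_colouring_def by blast

lemma colour_neq: "\<lbrakk>x \<in> S; y \<in> S; E x y\<rbrakk> \<Longrightarrow> f x \<noteq> f y"
  using optimal unfolding proper_colouring_def by blast

lemma adjacent_sym: "\<lbrakk>x \<in> S; y \<in> S; E x y\<rbrakk> \<Longrightarrow> E y x"
  using simple by (rule simple_graph_sym)

lemma colour_used:
  assumes "proper_colouring S E k g" "c < k"
  obtains x where "x \<in> S" "g x = c"
proof (rule ccontr)
  assume "\<not> thesis"
  then have "g ` S \<subseteq> {..<k} - {c}"
    using that assms(1) unfolding proper_colouring_def by blast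
  then have "card (g ` S) < k"
    using assms(2) card_mono[of "{..<k} - {c}" "g ` S"] by fastforce
  moreover have "k \<le> card (g ` S)"
    using assms(1) simple_graph_finite[OF simple]
    by (intro chromatic_number_le_card_image) (auto simp: proper_colouring_def)
  ultimately show False by simp
qed

lemma recolour_into_class:
  assumes g: "proper_colouring S E k g" and x: "x \<in> S" and v: "v \<in> S" "g v = c" "\<not> E x v"
    and unique: "\<And>y. \<lbrakk>y \<in> S; y \<noteq> x; g y = c\<rbrakk> \<Longrightarrow> y = v"
  shows "proper_colouring S E k (g(x := c))"
proof -
  have "c < k" using g v unfolding proper_colouring_def by blast
  moreover have "\<not> E x y \<and> \<not> E y x" if "y \<in> S" "y \<noteq> x" "g y = c" for y
    using unique[OF that] v(3) adjacent_sym x that(1) by blast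
  ultimately have "proper_colouring (insert x S) E k (g(x := c))"
    using g simple_graph_irrefl[OF simple x] by (intro proper_colouring_fun_upd)
  then show ?thesis using x by (simp add: insert_absorb)
qed

definition singletons :: "'a set" where
  "singletons = {u \<in> S. \<forall>y\<in>S. f y = f u \<longrightarrow> y = u}"

definition mates :: "'a \<Rightarrow> 'a \<Rightarrow> bool" where
  "mates x y \<longleftrightarrow> x \<in> S \<and> y \<in> S \<and> x \<noteq> y \<and> f x = f y"

lemma mates_sym: "mates x y \<Longrightarrow> mates y x"
  unfolding mates_def by auto

lemma mates_not_adjacent: "mates x y \<Longrightarrow> \<not> E x y"
  unfolding mates_def using colour_neq by blast

lemma singleton_colour: "\<lbrakk>u \<in> singletons; y \<in> S; f y = f u\<rbrakk> \<Longrightarrow> y = u"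
  unfolding singletons_def by blast

lemma mates_not_singleton: "mates x y \<Longrightarrow> x \<notin> singletons"
  unfolding mates_def singletons_def by auto

lemma obtain_mate:
  assumes "x \<in> S" "x \<notin> singletons"
  obtains y where "mates x y"
proof -
  obtain y where "y \<in> S" "f y = f x" "y \<noteq> x"
    using assms unfolding singletons_def by blast
  then have "mates x y" using assms(1) unfolding mates_def by auto
  then show thesis by (rule that)
qed

lemma singletons_clique: "is_clique S E singletons"
  unfolding is_clique_def
proof (intro conjI ballI impI)
  show "singletons \<subseteq> S" unfolding singletons_def by blast
next
  fix u v assume uv: "u \<in> singletons" "v \<in> singletons" "u \<noteq> v"
  have S: "u \<in> S" "v \<in> S" using uv unfolding singletons_def by auto
  show "E u v"
  proof (rule ccontr)
    assume "\<not> E u v"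
    \<comment> \<open>then v can join the class of u, freeing the colour of v\<close>
    have "proper_colouring S E k (f(v := f u))"
    proof (rule recolour_into_class[OF optimal S(2) S(1) refl])
      show "\<not> E v u" using \<open>\<not> E u v\<close> adjacent_sym S by blast
      show "y = u" if "y \<in> S" "y \<noteq> v" "f y = f u" for y
        using that singleton_colour[OF uv(1)] by blast
    qed
    then obtain x where x: "x \<in> S" "(f(v := f u)) x = f v"
      using colour_used colour_less S by metis
    show False
    proof (cases "x = v")
      case True
      then have "f v = f u" using x by simp
      then show False using singleton_colour[OF uv(1) S(2)] uv(3) by blast
    next
      case False
      then show False using x singleton_colour[OF uv(2)] by simp
    qed
  qed
qed

end

locale alpha_two_optimal_colouring = optimal_colouring +
  assumes no_independent_triple:
    "\<lbrakk>x \<in> S; y \<in> S; z \<in> S; x \<noteq> y; y \<noteq> z; x \<noteq> z\<rbrakk> \<Longrightarrow> E x y \<or> E y z \<or> E x z"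
begin

lemma mates_colour_class:
  assumes "mates w z" "y \<in> S" "f y = f w"
  shows "y = w \<or> y = z"
  using assms no_independent_triple[of w z y] colour_neq unfolding mates_def by metis

lemma non_neighbours_clique:
  assumes "v \<in> S"
  shows "is_clique S E {u \<in> S. u \<noteq> v \<and> \<not> E v u}"
  unfolding is_clique_def using assms no_independent_triple by blast

lemma double_card_singletons: "2 * k = card S + card singletons"
proof -
  define C where "C c = {x \<in> S. f x = c}" for c
  have fin: "finite S" using simple simple_graph_finite by blast
  have S_UN: "S = (\<Union>c<k. C c)" and singletons_UN: "singletons = (\<Union>c<k. singletons \<inter> C c)"
    unfolding C_def singletons_def using colour_less by auto
  have "card S = (\<Sum>c<k. card (C c))"
    by (subst S_UN, rule card_UN_disjoint) (auto simp: C_def intro: finite_subset[OF _ fin])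
  moreover have "card singletons = (\<Sum>c<k. card (singletons \<inter> C c))"
    by (subst singletons_UN, rule card_UN_disjoint)
      (auto simp: C_def singletons_def intro: finite_subset[OF _ fin])
  moreover have "card (C c) + card (singletons \<inter> C c) = 2" if c: "c < k" for c
  proof -
    obtain x where x: "x \<in> S" "f x = c" using colour_used[OF optimal c] by blast
    show ?thesis
    proof (cases "x \<in> singletons")
      case True
      then have "C c = {x}" "singletons \<inter> C c = {x}"
        using x singleton_colour unfolding C_def by auto
      then show ?thesis by simp
    next
      case False
      then obtain y where y: "mates x y" using x obtain_mate by blast
      have "y \<in> S" "f y = c" using x y unfolding mates_def by auto
      then have "C c = {x, y}"
        using x mates_colour_class[OF y] unfolding C_def by auto
      moreover have "singletons \<inter> {x, y} = {}"
        using y mates_sym mates_not_singleton by blast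
      moreover have "x \<noteq> y" using y unfolding mates_def by blast
      ultimately show ?thesis by simp
    qed
  qed
  ultimately show ?thesis by (simp add: sum.distrib[symmetric])
qed

lemma mate_adjacent_singleton:
  assumes u: "u \<in> singletons" and a: "a \<in> singletons"
    and wz: "mates w z" and uw: "\<not> E u w"
  shows "E z a"
proof (rule ccontr)
  assume za: "\<not> E z a"
  have S: "u \<in> S" "a \<in> S" "w \<in> S" "z \<in> S"
    using u a wz unfolding singletons_def mates_def by auto
  have not_singleton: "w \<notin> singletons" "z \<notin> singletons"
    using wz mates_sym mates_not_singleton by blast+
  show False
  proof (cases "a = u")
    case True
    have "u \<noteq> w" "u \<noteq> z" "w \<noteq> z" "\<not> E w z"
      using u not_singleton wz mates_not_adjacent unfolding mates_def by auto
    then have "E u z" using no_independent_triple[of u w z] S uw by blast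
    then show False using za True S adjacent_sym by blast
  next
    case False
    \<comment> \<open>move w into the class of u and z into the class of a: the colour of w becomes free\<close>
    have fw: "f u \<noteq> f w" "f a \<noteq> f w" and fua: "f u \<noteq> f a"
      using S u a False not_singleton singleton_colour by metis+
    have "proper_colouring S E k (f(w := f u))"
    proof (rule recolour_into_class[OF optimal S(3) S(1) refl])
      show "\<not> E w u" using uw adjacent_sym S by blast
      show "y = u" if "y \<in> S" "y \<noteq> w" "f y = f u" for y
        using that singleton_colour[OF u] by blast
    qed
    then have g: "proper_colouring S E k (f(w := f u, z := f a))"
    proof (rule recolour_into_class[OF _ S(4) S(2)])
      show "(f(w := f u)) a = f a" using fw by auto
      show "\<not> E z a" using za .
      show "y = a" if "y \<in> S" "y \<noteq> z" "(f(w := f u)) y = f a" for y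
        using that fua singleton_colour[OF a] by (auto split: if_splits)
    qed
    obtain y where "y \<in> S" "(f(w := f u, z := f a)) y = f w"
      using colour_used[OF g] colour_less S by metis
    then show False
      using fw wz mates_colour_class[OF wz] unfolding mates_def
      by (auto split: if_splits)
  qed
qed

lemma mate_adjacent_mate:
  assumes u: "u \<in> singletons" "u' \<in> singletons" "u \<noteq> u'"
    and wz: "mates w z" and uw: "\<not> E u w"
    and aw': "mates a w'" and uw': "\<not> E u' w'"
    and colours: "f a \<noteq> f w"
  shows "E z a"
proof (rule ccontr)
  assume za: "\<not> E z a"
  have S: "u \<in> S" "u' \<in> S" "w \<in> S" "z \<in> S" "a \<in> S" "w' \<in> S"
    using u wz aw' unfolding singletons_def mates_def by auto
  have not_singleton: "w \<notin> singletons" "w' \<notin> singletons" "a \<notin> singletons"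
    using wz aw' mates_sym mates_not_singleton by blast+
  have colour_ne: "f u \<noteq> f u'" "f u \<noteq> f w" "f u' \<noteq> f w" "f u \<noteq> f a" "f u' \<noteq> f a"
    using S u not_singleton singleton_colour by metis+
  have f_eq: "f z = f w" "f w' = f a" "w \<noteq> z" "w \<noteq> w'" "z \<noteq> w'" "a \<noteq> z"
    using wz aw' colours unfolding mates_def by auto
  \<comment> \<open>move w to the class of u, w' to that of u' and a to that of z: the colour of a becomes free\<close>
  define g where "g = f(w := f u, w' := f u', a := f z)"
  have "proper_colouring S E k (f(w := f u))"
  proof (rule recolour_into_class[OF optimal S(3) S(1) refl])
    show "\<not> E w u" using uw adjacent_sym S by blast
    show "y = u" if "y \<in> S" "y \<noteq> w" "f y = f u" for y
      using that singleton_colour[OF u(1)] by blast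
  qed
  then have "proper_colouring S E k (f(w := f u, w' := f u'))"
  proof (rule recolour_into_class[OF _ S(6) S(2)])
    show "(f(w := f u)) u' = f u'" using colour_ne(3) by auto
    show "\<not> E w' u'" using uw' adjacent_sym S by blast
    show "y = u'" if "y \<in> S" "y \<noteq> w'" "(f(w := f u)) y = f u'" for y
      using that colour_ne(1) singleton_colour[OF u(2)] by (auto split: if_splits)
  qed
  then have g: "proper_colouring S E k g"
    unfolding g_def
  proof (rule recolour_into_class[OF _ S(5) S(4)])
    show "(f(w := f u, w' := f u')) z = f z" using f_eq by auto
    show "\<not> E a z" using za adjacent_sym S by blast
    show "y = z" if "y \<in> S" "y \<noteq> a" "(f(w := f u, w' := f u')) y = f z" for y
      using that f_eq colour_ne mates_colour_class[OF wz] by (auto split: if_splits)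
  qed
  obtain y where "y \<in> S" "g y = f a"
    using colour_used[OF g] colour_less S by metis
  then show False
    using f_eq colour_ne colours mates_colour_class[OF aw'(1)] unfolding g_def
    by (auto split: if_splits)
qed

lemma non_neighbour_with_new_colour:
  assumes "u \<in> S" "Z \<subseteq> S" "card Z < card S - 1 - max_degree S E"
  obtains w where "w \<in> S" "w \<noteq> u" "\<not> E u w" "f w \<notin> f ` Z"
proof -
  have fin: "finite S" using simple simple_graph_finite by blast
  define N where "N = {x \<in> S. x \<noteq> u \<and> \<not> E u x}"
  have "inj_on f N"
    using non_neighbours_clique[OF assms(1)] colour_neq unfolding N_def is_clique_def inj_on_def
    by blast
  then have "card (f ` N) = card N" by (rule card_image)
  moreover have "card N + degree S E u + 1 = card S"
    using card_non_neighbours[OF simple assms(1)] unfolding N_def .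
  moreover have "degree S E u \<le> max_degree S E"
    using degree_le_max_degree[OF fin assms(1)] .
  moreover have "card (f ` Z) \<le> card Z"
    using assms(2) fin by (intro card_image_le) (rule finite_subset)
  moreover have "finite (f ` Z)"
    using assms(2) fin by (auto intro: finite_subset)
  ultimately have "\<not> f ` N \<subseteq> f ` Z"
    using assms(3) card_mono[of "f ` Z" "f ` N"] by linarith
  then show thesis using that unfolding N_def by blast
qed

lemma mate_extends_clique:
  assumes u: "u \<in> singletons"
    and w: "w \<in> S" "w \<noteq> u" "\<not> E u w" "f w \<notin> f ` Z"
    and Z: "Z \<subseteq> S - singletons" "is_clique S E (singletons \<union> Z)"
    and mates_Z: "\<forall>a\<in>Z. \<exists>u'\<in>singletons - {u}. \<exists>w'. mates a w' \<and> \<not> E u' w'"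
  obtains z where "mates w z" "z \<in> S - singletons" "z \<notin> Z"
    "is_clique S E (insert z (singletons \<union> Z))"
proof -
  have "w \<notin> singletons"
  proof
    assume "w \<in> singletons"
    then have "E u w"
      using u w(2) singletons_clique unfolding is_clique_def by metis
    then show False using w(3) by contradiction
  qed
  then obtain z where wz: "mates w z" using w(1) obtain_mate by blast
  have "z \<in> S" "f z = f w" using wz unfolding mates_def by auto
  have z_singleton: "z \<notin> singletons"
    using mates_not_singleton[OF mates_sym[OF wz]] .
  have z_Z: "z \<notin> Z"
    using w(4) \<open>f z = f w\<close> by (metis image_eqI)
  have "E z a \<and> E a z" if "a \<in> singletons \<union> Z" "a \<noteq> z" for a
  proof -
    have "E z a"
    proof (cases "a \<in> singletons")
      case True
      then show ?thesis using mate_adjacent_singleton[OF u _ wz w(3)] by blast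
    next
      case False
      then have "a \<in> Z" using that by blast
      then obtain u' w' where "u' \<in> singletons - {u}" "mates a w'" "\<not> E u' w'"
        using mates_Z by blast
      moreover have "f a \<noteq> f w" using w(4) \<open>a \<in> Z\<close> by (metis image_eqI)
      ultimately show ?thesis using mate_adjacent_mate[OF u _ _ wz w(3)] by blast
    qed
    then show ?thesis using adjacent_sym that \<open>z \<in> S\<close> Z unfolding is_clique_def by blast
  qed
  then have "is_clique S E (insert z (singletons \<union> Z))"
    using Z(2) \<open>z \<in> S\<close> by (intro is_clique_insert) auto
  then show thesis using that wz \<open>z \<in> S\<close> z_singleton z_Z by blast
qed

(* The last conjunct is the invariant that lets mate_extends_clique apply in the next step. *)

lemma clique_extension:
  assumes "W \<subseteq> singletons" "card W \<le> card S - 1 - max_degree S E"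
  shows "\<exists>Z. Z \<subseteq> S - singletons \<and> card Z = card W \<and> is_clique S E (singletons \<union> Z)
           \<and> (\<forall>a\<in>Z. \<exists>u\<in>W. \<exists>w. mates a w \<and> \<not> E u w)"
proof -
  have fin: "finite S" using simple simple_graph_finite by blast
  have "finite W"
    using assms(1) fin unfolding singletons_def by (auto intro: finite_subset)
  then show ?thesis
    using assms
  proof (induction W rule: finite_induct)
    case empty
    show ?case using singletons_clique by auto
  next
    case (insert u W)
    obtain Z where Z: "Z \<subseteq> S - singletons" "card Z = card W" "is_clique S E (singletons \<union> Z)"
      "\<forall>a\<in>Z. \<exists>u'\<in>W. \<exists>w'. mates a w' \<and> \<not> E u' w'"
      using insert by auto
    have u: "u \<in> singletons" "u \<in> S" using insert.prems unfolding singletons_def by auto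
    have "card Z < card S - 1 - max_degree S E" using Z(2) insert by simp
    then obtain w where w: "w \<in> S" "w \<noteq> u" "\<not> E u w" "f w \<notin> f ` Z"
      using non_neighbour_with_new_colour[OF u(2)] Z(1) by blast
    moreover have "\<forall>a\<in>Z. \<exists>u'\<in>singletons - {u}. \<exists>w'. mates a w' \<and> \<not> E u' w'"
      using Z(4) insert.hyps(2) insert.prems(1) by blast
    ultimately obtain z where z: "mates w z" "z \<in> S - singletons" "z \<notin> Z"
      "is_clique S E (insert z (singletons \<union> Z))"
      using mate_extends_clique[OF u(1)] Z(1,3) by blast
    have "card (insert z Z) = card (insert u W)"
      using Z(1,2) z(3) insert.hyps fin by (simp add: finite_subset)
    moreover have "\<forall>a\<in>insert z Z. \<exists>u'\<in>insert u W. \<exists>w'. mates a w' \<and> \<not> E u' w'"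
      using Z(4) z(1) mates_sym w(3) by blast
    ultimately show ?case using Z(1) z by (intro exI[of _ "insert z Z"]) auto
  qed
qed

theorem chromatic_number_bound:
  "4 * k \<le> card S + 2 * clique_number S E + max_degree S E + 1"
proof -
  have fin: "finite S" using simple simple_graph_finite by blast
  define d where "d = card S - 1 - max_degree S E"
  have d: "d + max_degree S E + 1 = card S"
    using max_degree_less_card[OF simple] unfolding d_def by linarith
  obtain v where v: "v \<in> S" using simple simple_graph_nonempty by blast
  have "d \<le> card {u \<in> S. u \<noteq> v \<and> \<not> E v u}"
    using card_non_neighbours[OF simple v] degree_le_max_degree[OF fin v, of E] d by linarith
  then have d_le: "d \<le> clique_number S E"
    using card_le_clique_number[OF fin non_neighbours_clique[OF v]] by linarith
  obtain W where W: "W \<subseteq> singletons" "card W = min (card singletons) d"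
    using obtain_subset_with_card_n[of "min (card singletons) d" singletons] by (metis min.cobounded1)
  then obtain Z where Z: "Z \<subseteq> S - singletons" "card Z = card W" "is_clique S E (singletons \<union> Z)"
    using clique_extension d_def by (metis min.cobounded2)
  have "card (singletons \<union> Z) = card singletons + card Z"
    using Z(1) fin by (intro card_Un_disjoint) (auto intro: finite_subset simp: singletons_def)
  then have "card singletons + min (card singletons) d \<le> clique_number S E"
    using card_le_clique_number[OF fin Z(3)] Z(2) W(2) by simp
  then show ?thesis
    using double_card_singletons d d_le by (simp add: min_def split: if_splits)
qed

end

lemma chromatic_number_bound_alpha_two:
  assumes "simple_graph S E"
    and "\<And>x y z. \<lbrakk>x \<in> S; y \<in> S; z \<in> S; x \<noteq> y; y \<noteq> z; x \<noteq> z\<rbrakk> \<Longrightarrow> E x y \<or> E y z \<or> E x z"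
  shows "4 * chromatic_number S E \<le> card S + 2 * clique_number S E + max_degree S E + 1"
proof -
  obtain f where "proper_colouring S E (chromatic_number S E) f"
    using assms(1) subset_refl by (rule chromatic_number_colouring)
  then interpret alpha_two_optimal_colouring S E f
    using assms by unfold_locales
  show ?thesis by (rule chromatic_number_bound)
qed

section \<open>The bound with chromatic excess\<close>

lemma independent_triple_imp_chromatic_excess_nonneg:
  assumes "simple_graph V E" "x \<in> V" "y \<in> V" "z \<in> V" "x \<noteq> y" "y \<noteq> z" "x \<noteq> z"
    and "\<not> E x y" "\<not> E y z" "\<not> E x z"
  shows "0 \<le> chromatic_excess V E"
proof -
  have "\<not> E y x" "\<not> E z y" "\<not> E z x"
    using assms simple_graph_sym by metis+
  then have "proper_colouring {x, y, z} E 1 (\<lambda>_. 0)"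
    using assms simple_graph_irrefl[OF assms(1)] unfolding proper_colouring_def by auto
  then have "chromatic_number {x, y, z} E \<le> 1" by (rule chromatic_number_le)
  moreover have "int (card {x, y, z}) - 3 * int (chromatic_number {x, y, z} E) \<le> chromatic_excess V E"
    using assms simple_graph_finite by (intro chromatic_excess_ge) auto
  ultimately show ?thesis using assms(5-7) by simp
qed

lemma chromatic_number_le_degree_of_excess_maximiser:
  assumes "simple_graph S E" "H \<subseteq> S" "r \<in> S - H"
    and "chromatic_excess S E = int (card H) - 3 * int (chromatic_number H E)"
  shows "chromatic_number H E \<le> degree H E r"
proof -
  obtain f where f: "proper_colouring H E (chromatic_number H E) f"
    using assms(1,2) by (rule chromatic_number_colouring)
  have "{..<chromatic_number H E} \<subseteq> f ` {x \<in> H. E r x}"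
  proof
    fix j assume j: "j \<in> {..<chromatic_number H E}"
    show "j \<in> f ` {x \<in> H. E r x}"
    proof (rule ccontr)
      assume j_free: "j \<notin> f ` {x \<in> H. E r x}"
      have "\<not> E r x \<and> \<not> E x r" if "x \<in> H" "x \<noteq> r" "f x = j" for x
        using j_free that simple_graph_sym[OF assms(1), of x r] assms(2,3) by blast
      then have "proper_colouring (insert r H) E (chromatic_number H E) (f(r := j))"
        using j simple_graph_irrefl[OF assms(1)] assms(3)
        by (intro proper_colouring_fun_upd[OF f]) auto
      then have "chromatic_number (insert r H) E \<le> chromatic_number H E"
        by (rule chromatic_number_le)
      moreover have "card (insert r H) = card H + 1"
        using assms(1-3) simple_graph_finite_subset by fastforce
      moreover have "int (card (insert r H)) - 3 * int (chromatic_number (insert r H) E)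
          \<le> chromatic_excess S E"
        using assms(1-3) simple_graph_finite by (intro chromatic_excess_ge) auto
      ultimately show False using assms(4) by linarith
    qed
  qed
  then show ?thesis
    unfolding degree_def using assms(1,2) simple_graph_finite_subset
    by (metis (no_types, lifting) card_lessThan finite_subset mem_Collect_eq subsetI surj_card_le)
qed

lemma max_degree_outside_excess_maximiser:
  assumes simple: "simple_graph S E" and H: "H \<subseteq> S" "S - H \<noteq> {}"
    and maximiser: "chromatic_excess S E = int (card H) - 3 * int (chromatic_number H E)"
  shows "max_degree (S - H) E + chromatic_number H E \<le> max_degree S E"
proof -
  have fin: "finite S" using simple simple_graph_finite by blast
  obtain r where r: "r \<in> S - H" "degree (S - H) E r = max_degree (S - H) E"
    using fin H(2) max_degree_obtain by (metis finite_Diff)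
  have "degree S E r = degree H E r + degree (S - H) E r"
    using H(1) fin degree_Un_disjoint[of H "S - H" E r] by (simp add: Un_absorb1 finite_subset)
  moreover have "chromatic_number H E \<le> degree H E r"
    using simple H(1) r(1) maximiser by (rule chromatic_number_le_degree_of_excess_maximiser)
  moreover have "degree S E r \<le> max_degree S E"
    using fin r(1) by (intro degree_le_max_degree) auto
  ultimately show ?thesis using r(2) by linarith
qed

lemma excess_bound_remove_maximiser:
  assumes simple: "simple_graph S E" and H: "H \<subseteq> S" "H \<noteq> {}" "S - H \<noteq> {}"
    and maximiser: "chromatic_excess S E = int (card H) - 3 * int (chromatic_number H E)"
    and nonneg: "0 \<le> chromatic_excess S E"
    and IH: "4 * int (chromatic_number (S - H) E) + max 0 (chromatic_excess (S - H) E)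
      \<le> int (card (S - H)) + 2 * int (clique_number (S - H) E) + int (max_degree (S - H) E) + 1"
  shows "4 * int (chromatic_number S E) + max 0 (chromatic_excess S E)
           \<le> int (card S) + 2 * int (clique_number S E) + int (max_degree S E) + 1"
proof -
  have fin: "finite S" using simple simple_graph_finite by blast
  have "chromatic_number S E \<le> chromatic_number H E + chromatic_number (S - H) E"
    using chromatic_number_Un_le[OF simple H(1), of "S - H"] H(1) by (simp add: Un_absorb1)
  moreover have "max_degree (S - H) E + chromatic_number H E \<le> max_degree S E"
    using simple H(1,3) maximiser by (rule max_degree_outside_excess_maximiser)
  moreover have "clique_number (S - H) E \<le> clique_number S E"
    using fin by (rule clique_number_mono) blast
  moreover have "card S = card H + card (S - H)"
    using fin H(1) by (metis card_Diff_subset card_mono finite_subset le_add_diff_inverse)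
  ultimately show ?thesis using IH maximiser nonneg by linarith
qed

theorem chromatic_number_excess_bound:
  assumes "simple_graph S E"
  shows "4 * int (chromatic_number S E) + max 0 (chromatic_excess S E)
           \<le> int (card S) + 2 * int (clique_number S E) + int (max_degree S E) + 1"
  using assms
proof (induction "card S" arbitrary: S rule: less_induct)
  case less
  note simple = less.prems
  have fin: "finite S" using simple simple_graph_finite by blast
  show ?case
  proof (cases "chromatic_excess S E < 0")
    case True
    then have "E x y \<or> E y z \<or> E x z"
      if "x \<in> S" "y \<in> S" "z \<in> S" "x \<noteq> y" "y \<noteq> z" "x \<noteq> z" for x y z
      using independent_triple_imp_chromatic_excess_nonneg[OF simple that] by force
    then show ?thesis
      using chromatic_number_bound_alpha_two[OF simple] True by fastforce
  next
    case False
    obtain H where H: "H \<subseteq> S" "H \<noteq> {}"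
      "chromatic_excess S E = int (card H) - 3 * int (chromatic_number H E)"
      using fin simple simple_graph_nonempty chromatic_excess_obtain by metis
    show ?thesis
    proof (cases "S - H = {}")
      case True
      then have "max 0 (chromatic_excess S E) = int (card S) - 3 * int (chromatic_number S E)"
        using H False by (simp add: Diff_eq_empty_iff subset_antisym)
      then show ?thesis
        using chromatic_number_le_max_degree[OF simple] by linarith
    next
      case nonempty: False
      have "S - H \<subset> S" using H(1,2) by blast
      then have "card (S - H) < card S" using fin by (rule psubset_card_mono[rotated])
      moreover have "simple_graph (S - H) E"
        using simple_graph_subset[OF simple _ nonempty] by blast
      ultimately show ?thesis
        using less.hyps excess_bound_remove_maximiser[OF simple H(1,2) nonempty H(3)] False
        by (metis linorder_not_le)
    qed
  qed
qed

section \<open>Joins\<close>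

locale graph_join =
  fixes A B :: "'a set" and E :: "'a \<Rightarrow> 'a \<Rightarrow> bool"
  assumes simple: "simple_graph (A \<union> B) E"
    and disjoint: "A \<inter> B = {}"
    and A_nonempty: "A \<noteq> {}" and B_nonempty: "B \<noteq> {}"
    and join_adjacent: "\<lbrakk>a \<in> A; b \<in> B\<rbrakk> \<Longrightarrow> E a b"
begin

lemma swap: "graph_join B A E"
proof
  show "simple_graph (B \<union> A) E" using simple by (simp add: Un_commute)
  show "B \<inter> A = {}" "B \<noteq> {}" "A \<noteq> {}" using disjoint A_nonempty B_nonempty by auto
  show "E b a" if "b \<in> B" "a \<in> A" for b a
    using that join_adjacent[of a b] simple_graph_sym[OF simple, of a b] by blast
qed

lemma finite_sides: "finite A" "finite B"
  using simple simple_graph_finite by auto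

lemma card_plus_max_degree_le: "card B + max_degree A E \<le> max_degree (A \<union> B) E"
proof -
  obtain v where v: "v \<in> A" "degree A E v = max_degree A E"
    using finite_sides A_nonempty max_degree_obtain by metis
  have "{u \<in> B. E v u} = B" using v(1) join_adjacent by blast
  then have "degree B E v = card B" unfolding degree_def by simp
  then have "degree (A \<union> B) E v = max_degree A E + card B"
    using degree_Un_disjoint[OF finite_sides disjoint] v(2) by simp
  moreover have "degree (A \<union> B) E v \<le> max_degree (A \<union> B) E"
    using degree_le_max_degree[OF simple_graph_finite[OF simple]] v(1) by blast
  ultimately show ?thesis by simp
qed

lemma clique_number_le: "clique_number A E + clique_number B E \<le> clique_number (A \<union> B) E"
proof -
  obtain CA where CA: "is_clique A E CA" "card CA = clique_number A E"
    using finite_sides clique_number_obtain by metis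
  obtain CB where CB: "is_clique B E CB" "card CB = clique_number B E"
    using finite_sides clique_number_obtain by metis
  have sub: "CA \<subseteq> A" "CB \<subseteq> B" using CA(1) CB(1) unfolding is_clique_def by auto
  have "is_clique (A \<union> B) E (CA \<union> CB)"
    unfolding is_clique_def
  proof (intro conjI ballI impI)
    show "CA \<union> CB \<subseteq> A \<union> B" using sub by blast
  next
    fix p q assume pq: "p \<in> CA \<union> CB" "q \<in> CA \<union> CB" "p \<noteq> q"
    then consider "p \<in> CA" "q \<in> CA" | "p \<in> CB" "q \<in> CB" | "p \<in> CA" "q \<in> CB"
      | "p \<in> CB" "q \<in> CA" by blast
    then show "E p q"
    proof cases
      case 1
      then show ?thesis using CA(1) pq(3) unfolding is_clique_def by blast
    next
      case 2
      then show ?thesis using CB(1) pq(3) unfolding is_clique_def by blast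
    next
      case 3
      then show ?thesis using sub join_adjacent by blast
    next
      case 4
      then have "E q p" using sub join_adjacent by blast
      then show ?thesis using simple_graph_sym[OF simple, of q p] sub 4 by blast
    qed
  qed
  then have "card (CA \<union> CB) \<le> clique_number (A \<union> B) E"
    using simple simple_graph_finite card_le_clique_number by blast
  moreover have "card (CA \<union> CB) = card CA + card CB"
    using CA(1) CB(1) finite_sides disjoint unfolding is_clique_def
    by (intro card_Un_disjoint) (auto intro: finite_subset)
  ultimately show ?thesis using CA(2) CB(2) by simp
qed

lemma chromatic_excess_le:
  "chromatic_excess (A \<union> B) E \<le> max 0 (chromatic_excess A E) + max 0 (chromatic_excess B E)"
proof -
  obtain H where H: "H \<subseteq> A \<union> B" "H \<noteq> {}"
    "chromatic_excess (A \<union> B) E = int (card H) - 3 * int (chromatic_number H E)"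
    using simple simple_graph_finite simple_graph_nonempty chromatic_excess_obtain by metis
  have HAB: "(H \<inter> A) \<union> (H \<inter> B) = H" using H(1) by blast
  have "chromatic_number (H \<inter> A) E + chromatic_number (H \<inter> B) E
      \<le> chromatic_number ((H \<inter> A) \<union> (H \<inter> B)) E"
    by (rule chromatic_number_join_ge[OF simple]) (use H(1) disjoint join_adjacent in auto)
  moreover have "card ((H \<inter> A) \<union> (H \<inter> B)) = card (H \<inter> A) + card (H \<inter> B)"
    using finite_sides disjoint by (intro card_Un_disjoint) auto
  moreover have "int (card (H \<inter> A)) - 3 * int (chromatic_number (H \<inter> A) E) \<le> max 0 (chromatic_excess A E)"
    "int (card (H \<inter> B)) - 3 * int (chromatic_number (H \<inter> B) E) \<le> max 0 (chromatic_excess B E)"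
    using finite_sides by (auto intro: excess_of_subset_le)
  ultimately show ?thesis using H(3) unfolding HAB by linarith
qed

theorem join_chromatic_number_bound:
  "4 * int (chromatic_number (A \<union> B) E) + chromatic_excess (A \<union> B) E
     \<le> 2 * int (clique_number (A \<union> B) E) + 2 * int (max_degree (A \<union> B) E) + 2"
proof -
  have "simple_graph A E" "simple_graph B E"
    using simple A_nonempty B_nonempty simple_graph_subset by blast+
  then have "4 * int (chromatic_number A E) + max 0 (chromatic_excess A E)
      \<le> int (card A) + 2 * int (clique_number A E) + int (max_degree A E) + 1"
    "4 * int (chromatic_number B E) + max 0 (chromatic_excess B E)
      \<le> int (card B) + 2 * int (clique_number B E) + int (max_degree B E) + 1"
    by (blast intro: chromatic_number_excess_bound)+
  moreover have "chromatic_number (A \<union> B) E \<le> chromatic_number A E + chromatic_number B E"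
    using simple by (rule chromatic_number_Un_le) auto
  moreover have "card A + max_degree B E \<le> max_degree (A \<union> B) E"
    using graph_join.card_plus_max_degree_le[OF swap] by (simp add: Un_commute)
  ultimately show ?thesis
    using card_plus_max_degree_le clique_number_le chromatic_excess_le by linarith
qed

end

section \<open>Vertex cuts of the complement\<close>

lemma disconnected_complement_join:
  assumes "\<not> connected_in S (compl_adj E)"
  obtains A B where "S = A \<union> B" "A \<inter> B = {}" "A \<noteq> {}" "B \<noteq> {}"
    "\<And>a b. \<lbrakk>a \<in> A; b \<in> B\<rbrakk> \<Longrightarrow> E a b"
proof -
  define R where "R = (\<lambda>u v. u \<in> S \<and> v \<in> S \<and> compl_adj E u v)"
  obtain x y where xy: "x \<in> S" "y \<in> S" "\<not> R\<^sup>*\<^sup>* x y"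
    using assms unfolding connected_in_def R_def by blast
  define A where "A = {v \<in> S. R\<^sup>*\<^sup>* x v}"
  have "E a b" if "a \<in> A" "b \<in> S - A" for a b
  proof (rule ccontr)
    assume "\<not> E a b"
    then have "R a b" using that unfolding R_def A_def compl_adj_def by auto
    then have "R\<^sup>*\<^sup>* x b" using that(1) unfolding A_def by auto
    then show False using that unfolding A_def by auto
  qed
  moreover have "x \<in> A" "y \<in> S - A" using xy unfolding A_def by auto
  ultimately show thesis
    by (intro that[of A "S - A"]) (auto simp: A_def)
qed

lemma vertex_connectivity_separator:
  assumes "finite V" "\<not> is_complete V E"
  obtains K where "K \<subseteq> V" "\<not> connected_in (V - K) E" "vertex_connectivity V E = card K"
proof -
  define sizes where "sizes = {card K | K. K \<subseteq> V \<and> \<not> connected_in (V - K) E}"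
  obtain x y where xy: "x \<in> V" "y \<in> V" "x \<noteq> y" "\<not> E x y"
    using assms(2) unfolding is_complete_def by blast
  have "\<not> connected_in {x, y} E"
  proof
    let ?R = "\<lambda>u v. u \<in> {x, y} \<and> v \<in> {x, y} \<and> E u v"
    have "?R\<^sup>*\<^sup>* x v \<Longrightarrow> v = x" for v
      by (induction rule: rtranclp_induct) (use xy in auto)
    moreover assume "connected_in {x, y} E"
    ultimately show False using xy(3) unfolding connected_in_def by blast
  qed
  moreover have "V - (V - {x, y}) = {x, y}" using xy by auto
  ultimately have "card (V - {x, y}) \<in> sizes" unfolding sizes_def by fastforce
  moreover have "finite sizes"
    unfolding sizes_def using assms(1) by (auto intro: finite_subset[of _ "card ` Pow V"])
  ultimately have "Min sizes \<in> sizes" using Min_in by blast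
  then show thesis
    using that assms(2) unfolding sizes_def vertex_connectivity_def by auto
qed

theorem chromatic_number_connectivity_bound:
  assumes "simple_graph V E"
  shows "4 * int (chromatic_number V E) + chromatic_excess V E
           \<le> 2 * int (clique_number V E) + 2 * int (max_degree V E) + 2
             + 5 * int (vertex_connectivity V (compl_adj E))"
proof (cases "is_complete V (compl_adj E)")
  case True
  have "\<not> E x y" if "x \<in> V" "y \<in> V" for x y
    using True simple_graph_irrefl[OF assms] that
    unfolding is_complete_def compl_adj_def by (cases "x = y") auto
  then have "proper_colouring V E 1 (\<lambda>_. 0)"
    unfolding proper_colouring_def by auto
  then have "chromatic_number V E \<le> 1" by (rule chromatic_number_le)
  moreover have "vertex_connectivity V (compl_adj E) = card V - 1"
    using True unfolding vertex_connectivity_def by simp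
  moreover have "1 \<le> card V"
    using simple_graph_finite[OF assms] simple_graph_nonempty[OF assms]
    by (simp add: Suc_leI card_gt_0_iff)
  ultimately show ?thesis using chromatic_excess_le_card[OF assms] by linarith
next
  case False
  have fin: "finite V" using assms simple_graph_finite by blast
  obtain K where K: "K \<subseteq> V" "\<not> connected_in (V - K) (compl_adj E)"
    "vertex_connectivity V (compl_adj E) = card K"
    using vertex_connectivity_separator[OF fin False] by blast
  obtain A B where AB: "V - K = A \<union> B" "A \<inter> B = {}" "A \<noteq> {}" "B \<noteq> {}"
    "\<And>a b. \<lbrakk>a \<in> A; b \<in> B\<rbrakk> \<Longrightarrow> E a b"
    using disconnected_complement_join[OF K(2)] by blast
  interpret graph_join A B E
    using simple_graph_subset[OF assms] AB by unfold_locales auto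
  have V: "V = (A \<union> B) \<union> K" using K(1) AB(1) by blast
  have "chromatic_number V E \<le> chromatic_number (A \<union> B) E + card K"
    using chromatic_number_Un_le[OF assms, of "A \<union> B" K] chromatic_number_le_card[OF assms K(1)]
      V K(1) by auto
  moreover have "clique_number (A \<union> B) E \<le> clique_number V E"
    using clique_number_mono[OF fin] V by blast
  moreover have "max_degree (A \<union> B) E \<le> max_degree V E"
    using max_degree_mono[OF fin] V AB(3) by blast
  moreover have "chromatic_excess V E \<le> chromatic_excess (A \<union> B) E + int (card K)"
    using chromatic_excess_Un_le[OF assms, of "A \<union> B" K] V K(1) AB(3) by auto
  ultimately show ?thesis using join_chromatic_number_bound K(3) by linarith
qed

theorem corollary13:
  fixes V :: "'a set" and E :: "'a \<Rightarrow> 'a \<Rightarrow> bool"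
  assumes "simple_graph V E"
  shows "real (chromatic_number V E) \<le>
           (real (clique_number V E) + real (max_degree V E) + 1) / 2
           + (5 * real (vertex_connectivity V (compl_adj E)) - real_of_int (chromatic_excess V E)) / 4"
proof -
  have "real_of_int (4 * int (chromatic_number V E) + chromatic_excess V E)
      \<le> real_of_int (2 * int (clique_number V E) + 2 * int (max_degree V E) + 2
           + 5 * int (vertex_connectivity V (compl_adj E)))"
    using chromatic_number_connectivity_bound[OF assms] by linarith
  then have "4 * real (chromatic_number V E) + real_of_int (chromatic_excess V E)
      \<le> 2 * real (clique_number V E) + 2 * real (max_degree V E) + 2
           + 5 * real (vertex_connectivity V (compl_adj E))"
    by simp
  then show ?thesis by (simp add: field_simps)
qed

end
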